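(* Let $A\in\mathbb{R}^{n\times n}$ be nonsymmetric and $A_0\in\mathbb{R}^{n\times n}$ symmetric positive definite, and suppose there are constants $c_0,c_1>0$ with $$\mathbf v^TA\mathbf v\ge c_0\,\mathbf v^TA_0\mathbf v\ \ \forall\mathbf v,\qquad \mathbf w^TA\mathbf v\le c_1\sqrt{\mathbf v^TA_0\mathbf v}\sqrt{\mathbf w^TA_0\mathbf w}\ \ \forall \mathbf v,\mathbf w\in\mathbb{R}^n.$$ Let $I_1,\dots,I_{N_s}$ be extension matrices and $P$ a coarse interpolation matrix as described in the context, and define the additive Schwarz preconditioners $B$ and $B_0$ by $$B^{-1}=P A_c^{-1}P^T+\sum_{k=1}^{N_s} I_kA_k^{-1}I_k^T,\qquad B_0^{-1}=P (A^{(0)}_c)^{-1}P^T+\sum_{k=1}^{N_s} I_k(A^{(0)}_k)^{-1}I_k^T,$$ where $A_k=I_k^TAI_k$, $A^{(0)}_k=I_k^TA_0I_k$, $A_c=P^TAP$, $A^{(0)}_c=P^TA_0P$. Assume there exist $\gamma_0,\gamma_1>0$ such that $$\gamma_0\,\mathbf v^TB_0\mathbf v\le \mathbf v^TA_0\mathbf v\le\gamma_1\,\mathbf v^TB_0\mathbf v\quad\text{for all }\mathbf v\in\mathbb{R}^n.$$ Then, with $$\beta_0=\frac{c_0^3}{c_1^2\gamma_1},\qquad \beta_1=\frac{c_1^2}{c_0\gamma_0},$$ we have $$\mathbf v^TB\mathbf v\ge\beta_0\,\mathbf v^TA_0\mathbf v\quad\text{for all }\mathbf v,\qquad \mathbf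 w^TB\mathbf v\le\beta_1\sqrt{\mathbf v^TA_0\mathbf v}\sqrt{\mathbf w^TA_0\mathbf w}\quad\text{for all }\mathbf v,\mathbf w,$$ and the same two estimates hold with $B$ replaced by $B^T$.
   Context: For $k=1,\dots,N_s$, $I_k\in\mathbb{R}^{n\times n_k}$ is a matrix whose columns are distinct standard basis vectors of $\mathbb{R}^n$ (so $I_k\mathbf v_k$ extends a local vector $\mathbf v_k$ by zero outside an index set, and $A_k$, $A_k^{(0)}$ are principal submatrices of $A$, $A_0$). $P\in\mathbb{R}^{n\times n_c}$ is a coarse-to-fine interpolation matrix with full column rank, so that $A_c$ and $A^{(0)}_c$ (and all local matrices) are invertible. *)

theory Defs
  imports "Jordan_Normal_Form.Matrix"
begin

text \<open>Inverse of a square matrix (only meaningful when the matrix is invertible).\<close>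
definition minv :: "real mat \<Rightarrow> real mat" where
  "minv M = (SOME N. inverts_mat M N \<and> inverts_mat N M)"

fun msum :: "nat \<Rightarrow> (nat \<Rightarrow> real mat) \<Rightarrow> nat \<Rightarrow> real mat" where
  "msum n f 0 = 0\<^sub>m n n"
| "msum n f (Suc k) = msum n f k + f (Suc k)"

definition extension_mat :: "nat \<Rightarrow> nat \<Rightarrow> real mat \<Rightarrow> bool" where
  "extension_mat n m E \<longleftrightarrow> E \<in> carrier_mat n m \<and>
     (\<exists>\<sigma>. inj_on \<sigma> {0..<m} \<and> (\<forall>j<m. \<sigma> j < n \<and> col E j = unit_vec n (\<sigma> j)))"

definition schwarz_inv :: "nat \<Rightarrow> real mat \<Rightarrow> real mat \<Rightarrow> nat \<Rightarrow> (nat \<Rightarrow> real mat) \<Rightarrow> real mat" where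
  "schwarz_inv n M P Ns Is =
     P * minv (transpose_mat P * M * P) * transpose_mat P
     + msum n (\<lambda>k. Is k * minv (transpose_mat (Is k) * M * Is k) * transpose_mat (Is k)) Ns"

end

theory Submission
  imports Defs "Jordan_Normal_Form.Determinant"
begin

text \<open>Everything rests on one observation about a pair (M, G) with G symmetric positive
  semidefinite: if M is coercive with constant a and bounded with constant K with respect to
  the G-energy, then M^-1 is coercive with constant a/K^2 and bounded with constant 1/a
  with respect to the G^-1-energy. Both properties survive congruences X \<mapsto> E X E^T and sums.
  Applied to the local and coarse matrices E^T A E this shows that the pair (B^-1, B0^-1) is
  coercive with constant c0/c1^2 and bounded with 1/c0; applying the observation once more
  gives the constants c0^3/c1^2 and c1^2/c0 for (B, B0), and the spectral equivalence of
  B0 and A0 converts these into the stated estimates.\<close>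

definition psd_mat :: "nat \<Rightarrow> real mat \<Rightarrow> bool" where
  "psd_mat n G \<longleftrightarrow> (\<forall>u \<in> carrier_vec n. u \<bullet> (G *\<^sub>v u) \<ge> 0)"

definition coercive_wrt :: "nat \<Rightarrow> real \<Rightarrow> real mat \<Rightarrow> real mat \<Rightarrow> bool" where
  "coercive_wrt n \<alpha> F G \<longleftrightarrow> (\<forall>u \<in> carrier_vec n. u \<bullet> (F *\<^sub>v u) \<ge> \<alpha> * (u \<bullet> (G *\<^sub>v u)))"

definition bounded_wrt :: "nat \<Rightarrow> real \<Rightarrow> real mat \<Rightarrow> real mat \<Rightarrow> bool" where
  "bounded_wrt n K F G \<longleftrightarrow> (\<forall>a \<in> carrier_vec n. \<forall>b \<in> carrier_vec n.
      a \<bullet> (F *\<^sub>v b) \<le> K * sqrt (b \<bullet> (G *\<^sub>v b)) * sqrt (a \<bullet> (G *\<^sub>v a)))"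

definition coercive_bounded :: "nat \<Rightarrow> real \<Rightarrow> real \<Rightarrow> real mat \<Rightarrow> real mat \<Rightarrow> bool" where
  "coercive_bounded n \<alpha> K F G \<longleftrightarrow> F \<in> carrier_mat n n \<and> G \<in> carrier_mat n n \<and>
     psd_mat n G \<and> coercive_wrt n \<alpha> F G \<and> bounded_wrt n K F G"

lemma le_sqrt_mult_of_quadratic_nonneg:
  fixes a b c :: real
  assumes q: "\<And>t. 0 \<le> a + 2*t*b + t^2*c" and "a \<ge> 0" and "c \<ge> 0"
  shows "b \<le> sqrt a * sqrt c"
proof -
  have "b^2 \<le> a * c"
  proof (cases "c = 0")
    case True
    show ?thesis
    proof (rule ccontr)
      assume "\<not> ?thesis"
      hence b: "b \<noteq> 0" using True by auto
      have "0 \<le> a + 2*(-(a+1)/(2*b))*b + (-(a+1)/(2*b))^2*c" by (rule q)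
      also have "\<dots> = -1" using b True by (simp add: field_simps)
      finally show False by simp
    qed
  next
    case False
    hence c: "c > 0" using \<open>c \<ge> 0\<close> by auto
    have "0 \<le> a + 2*(-b/c)*b + (-b/c)^2*c" by (rule q)
    also have "\<dots> = a - b^2/c" using c by (simp add: field_simps power2_eq_square)
    finally show ?thesis using c by (simp add: field_simps)
  qed
  hence "sqrt (b^2) \<le> sqrt (a*c)" by (rule real_sqrt_le_mono)
  thus ?thesis by (simp add: real_sqrt_mult)
qed

lemma sqrt_le_of_le_mult_sqrt:
  fixes a c :: real
  assumes "a \<ge> 0" and "c \<ge> 0" and le: "a \<le> c * sqrt a"
  shows "sqrt a \<le> c"
proof (cases "a = 0")
  case False
  hence "sqrt a > 0" using \<open>a \<ge> 0\<close> by simp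
  moreover have "sqrt a * sqrt a \<le> c * sqrt a" using le \<open>a \<ge> 0\<close> by simp
  ultimately show ?thesis using mult_right_le_imp_le by blast
qed (use \<open>c \<ge> 0\<close> in simp)

lemma sqrt_mult_add_le:
  fixes p1 p2 q1 q2 :: real
  assumes "p1 \<ge> 0" "p2 \<ge> 0" "q1 \<ge> 0" "q2 \<ge> 0"
  shows "sqrt p1 * sqrt q1 + sqrt p2 * sqrt q2 \<le> sqrt (p1 + p2) * sqrt (q1 + q2)"
proof -
  define x1 x2 y1 y2 where "x1 = sqrt p1" "x2 = sqrt p2" "y1 = sqrt q1" "y2 = sqrt q2"
  have p: "p1 = x1^2" "p2 = x2^2" "q1 = y1^2" "q2 = y2^2"
    using assms unfolding x1_x2_y1_y2_def by auto
  have "(x1^2 + x2^2) * (y1^2 + y2^2) - (x1*y1 + x2*y2)^2 = (x1*y2 - x2*y1)^2"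
    by (simp add: power2_eq_square algebra_simps)
  hence "(x1*y1 + x2*y2)^2 \<le> (x1^2 + x2^2) * (y1^2 + y2^2)"
    by (metis diff_ge_0_iff_ge zero_le_power2)
  hence "x1*y1 + x2*y2 \<le> sqrt ((x1^2 + x2^2) * (y1^2 + y2^2))"
    using real_sqrt_le_mono by fastforce
  thus ?thesis unfolding p by (simp add: x1_x2_y1_y2_def real_sqrt_mult assms)
qed

lemma minv_correct:
  assumes M: "M \<in> carrier_mat m m" and "invertible_mat M"
  shows "minv M \<in> carrier_mat m m \<and> M * minv M = 1\<^sub>m m \<and> minv M * M = 1\<^sub>m m"
proof -
  have "\<exists>N. inverts_mat M N \<and> inverts_mat N M"
    using \<open>invertible_mat M\<close> unfolding invertible_mat_def by blast
  hence X: "inverts_mat M (minv M) \<and> inverts_mat (minv M) M"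
    unfolding minv_def by (rule someI_ex)
  have MX: "M * minv M = 1\<^sub>m m" using X M unfolding inverts_mat_def by simp
  have XM: "minv M * M = 1\<^sub>m (dim_row (minv M))" using X unfolding inverts_mat_def by simp
  have c: "dim_col (minv M) = m" using arg_cong[OF MX, of dim_col] by simp
  have r: "dim_row (minv M) = m" using arg_cong[OF XM, of dim_col] M by simp
  show ?thesis using MX XM c r by auto
qed

lemma pos_def_imp_invertible_mat:
  fixes M :: "real mat"
  assumes M: "M \<in> carrier_mat m m"
    and pd: "\<And>x. x \<in> carrier_vec m \<Longrightarrow> x \<noteq> 0\<^sub>v m \<Longrightarrow> x \<bullet> (M *\<^sub>v x) > 0"
  shows "invertible_mat M"
proof -
  have "det M \<noteq> 0"
  proof
    assume "det M = 0"
    then obtain v where "v \<in> carrier_vec m" "v \<noteq> 0\<^sub>v m" "M *\<^sub>v v = 0\<^sub>v m"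
      using det_0_iff_vec_prod_zero[OF M] by blast
    thus False using pd by fastforce
  qed
  from det_non_zero_imp_unit[OF M this, of "()"]
  have "\<exists>N \<in> carrier_mat m m. N * M = 1\<^sub>m m \<and> M * N = 1\<^sub>m m"
    unfolding Units_def ring_mat_def by simp
  then obtain N where "N \<in> carrier_mat m m" "N * M = 1\<^sub>m m" "M * N = 1\<^sub>m m"
    by blast
  hence "inverts_mat M N \<and> inverts_mat N M" using M unfolding inverts_mat_def by simp
  thus ?thesis using M unfolding invertible_mat_def by auto
qed

lemma mult_right_inverse_mat_vec:
  fixes M N :: "real mat"
  assumes "M \<in> carrier_mat m m" "N \<in> carrier_mat m m" "M * N = 1\<^sub>m m" "x \<in> carrier_vec m"
  shows "M *\<^sub>v (N *\<^sub>v x) = x"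
  using assoc_mult_mat_vec[OF assms(1,2,4)] one_mult_mat_vec[OF assms(4)] assms(3) by simp

subsection \<open>Energy estimates for a pair of matrices\<close>

lemma pos_def_imp_psd_mat:
  assumes "G \<in> carrier_mat n n"
    and "\<And>v. v \<in> carrier_vec n \<Longrightarrow> v \<noteq> 0\<^sub>v n \<Longrightarrow> v \<bullet> (G *\<^sub>v v) > 0"
  shows "psd_mat n G"
  unfolding psd_mat_def
proof
  fix v :: "real vec" assume v: "v \<in> carrier_vec n"
  show "v \<bullet> (G *\<^sub>v v) \<ge> 0"
    using assms(2)[OF v] assms(1) by (cases "v = 0\<^sub>v n") (auto simp: less_imp_le)
qed

lemma psd_sym_bounded_self:
  fixes G :: "real mat"
  assumes G: "G \<in> carrier_mat m m" and sym: "transpose_mat G = G" and psd: "psd_mat m G"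
  shows "bounded_wrt m 1 G G"
  unfolding bounded_wrt_def
proof (intro ballI)
  fix x z :: "real vec" assume x: "x \<in> carrier_vec m" and z: "z \<in> carrier_vec m"
  have zx: "z \<bullet> (G *\<^sub>v x) = x \<bullet> (G *\<^sub>v z)"
    using transpose_vec_mult_scalar[OF G z x] sym G x z
    by (metis comm_scalar_prod mult_mat_vec_carrier)
  have "0 \<le> x \<bullet> (G *\<^sub>v x) + 2*t*(x \<bullet> (G *\<^sub>v z)) + t^2*(z \<bullet> (G *\<^sub>v z))" for t
  proof -
    have tz: "t \<cdot>\<^sub>v z \<in> carrier_vec m" using z by simp
    have "0 \<le> (x + t \<cdot>\<^sub>v z) \<bullet> (G *\<^sub>v (x + t \<cdot>\<^sub>v z))" using psd x tz unfolding psd_mat_def by simp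
    also have "G *\<^sub>v (x + t \<cdot>\<^sub>v z) = G *\<^sub>v x + t \<cdot>\<^sub>v (G *\<^sub>v z)"
      using G x tz z by (simp add: mult_add_distrib_mat_vec mult_mat_vec)
    also have "(x + t \<cdot>\<^sub>v z) \<bullet> (G *\<^sub>v x + t \<cdot>\<^sub>v (G *\<^sub>v z))
       = x \<bullet> (G *\<^sub>v x) + t * (x \<bullet> (G *\<^sub>v z)) + t * (z \<bullet> (G *\<^sub>v x)) + t*t*(z \<bullet> (G *\<^sub>v z))"
      using G x z tz
      by (simp add: add_scalar_prod_distrib[of _ m] scalar_prod_add_distrib[of _ m] algebra_simps)
    finally show ?thesis using zx by (simp add: power2_eq_square algebra_simps)
  qed
  hence "x \<bullet> (G *\<^sub>v z) \<le> sqrt (x \<bullet> (G *\<^sub>v x)) * sqrt (z \<bullet> (G *\<^sub>v z))"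
    by (rule le_sqrt_mult_of_quadratic_nonneg) (use psd x z in \<open>auto simp: psd_mat_def\<close>)
  thus "x \<bullet> (G *\<^sub>v z) \<le> 1 * sqrt (z \<bullet> (G *\<^sub>v z)) * sqrt (x \<bullet> (G *\<^sub>v x))"
    by (simp add: ac_simps)
qed

lemma psd_mat_inverse:
  assumes G: "G \<in> carrier_mat m m" and H: "H \<in> carrier_mat m m" and GH: "G * H = 1\<^sub>m m"
    and psd: "psd_mat m G"
  shows "psd_mat m H"
  unfolding psd_mat_def
proof
  fix x :: "real vec" assume x: "x \<in> carrier_vec m"
  have z: "H *\<^sub>v x \<in> carrier_vec m" using H x by simp
  have "x \<bullet> (H *\<^sub>v x) = (G *\<^sub>v (H *\<^sub>v x)) \<bullet> (H *\<^sub>v x)"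
    using mult_right_inverse_mat_vec[OF G H GH x] by simp
  also have "\<dots> = (H *\<^sub>v x) \<bullet> (G *\<^sub>v (H *\<^sub>v x))" using G z by (simp add: comm_scalar_prod[of _ m])
  finally show "x \<bullet> (H *\<^sub>v x) \<ge> 0" using psd z unfolding psd_mat_def by simp
qed

lemma bounded_wrt_dual:
  assumes G: "G \<in> carrier_mat m m" and H: "H \<in> carrier_mat m m" and GH: "G * H = 1\<^sub>m m"
    and bnd: "bounded_wrt m K G G" and x: "x \<in> carrier_vec m" and y: "y \<in> carrier_vec m"
  shows "x \<bullet> y \<le> K * sqrt (x \<bullet> (G *\<^sub>v x)) * sqrt (y \<bullet> (H *\<^sub>v y))"
proof -
  define t where "t = H *\<^sub>v y"
  have t: "t \<in> carrier_vec m" using H y t_def by simp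
  have Gt: "G *\<^sub>v t = y" unfolding t_def by (rule mult_right_inverse_mat_vec[OF G H GH y])
  have "x \<bullet> y = x \<bullet> (G *\<^sub>v t)" using Gt by simp
  also have "\<dots> \<le> K * sqrt (t \<bullet> (G *\<^sub>v t)) * sqrt (x \<bullet> (G *\<^sub>v x))"
    using bnd x t unfolding bounded_wrt_def by auto
  also have "t \<bullet> (G *\<^sub>v t) = y \<bullet> (H *\<^sub>v y)"
    using Gt comm_scalar_prod[OF t y] t_def by simp
  finally show ?thesis by (simp add: ac_simps)
qed

lemma bounded_wrt_image_le:
  assumes F: "F \<in> carrier_mat m m" and G: "G \<in> carrier_mat m m" and H: "H \<in> carrier_mat m m"
    and GH: "G * H = 1\<^sub>m m" and psd: "psd_mat m G" and bnd: "bounded_wrt m K F G"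
    and K: "K \<ge> 0" and y: "y \<in> carrier_vec m"
  shows "(F *\<^sub>v y) \<bullet> (H *\<^sub>v (F *\<^sub>v y)) \<le> K^2 * (y \<bullet> (G *\<^sub>v y))"
proof -
  define x where "x = F *\<^sub>v y"
  define z where "z = H *\<^sub>v x"
  have x: "x \<in> carrier_vec m" using F y x_def by simp
  have z: "z \<in> carrier_vec m" using H x z_def by simp
  have Gz: "G *\<^sub>v z = x" unfolding z_def by (rule mult_right_inverse_mat_vec[OF G H GH x])
  have X: "x \<bullet> z \<ge> 0" using psd_mat_inverse[OF G H GH psd] x unfolding psd_mat_def z_def by simp
  have s: "y \<bullet> (G *\<^sub>v y) \<ge> 0" using psd y unfolding psd_mat_def by simp
  have "x \<bullet> z = z \<bullet> x" by (rule comm_scalar_prod[OF x z])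
  also have "\<dots> = z \<bullet> (F *\<^sub>v y)" using x_def by simp
  also have "\<dots> \<le> K * sqrt (y \<bullet> (G *\<^sub>v y)) * sqrt (z \<bullet> (G *\<^sub>v z))"
    using bnd y z unfolding bounded_wrt_def by auto
  also have "z \<bullet> (G *\<^sub>v z) = x \<bullet> z" using Gz by (simp add: comm_scalar_prod[OF z x])
  finally have "sqrt (x \<bullet> z) \<le> K * sqrt (y \<bullet> (G *\<^sub>v y))"
    using X K s by (intro sqrt_le_of_le_mult_sqrt) auto
  hence "(sqrt (x \<bullet> z))^2 \<le> (K * sqrt (y \<bullet> (G *\<^sub>v y)))^2" using X by (intro power_mono) auto
  thus ?thesis using X s unfolding x_def z_def by (simp add: power_mult_distrib)
qed

lemma coercive_wrt_inverse:
  assumes M: "M \<in> carrier_mat m m" and N: "N \<in> carrier_mat m m" and MN: "M * N = 1\<^sub>m m"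
    and G: "G \<in> carrier_mat m m" and H: "H \<in> carrier_mat m m" and GH: "G * H = 1\<^sub>m m"
    and psd: "psd_mat m G" and coer: "coercive_wrt m \<alpha> M G" and bnd: "bounded_wrt m K M G"
    and \<alpha>: "\<alpha> \<ge> 0" and K: "K > 0"
  shows "coercive_wrt m (\<alpha> / K^2) N H"
  unfolding coercive_wrt_def
proof
  fix x :: "real vec" assume x: "x \<in> carrier_vec m"
  define y where "y = N *\<^sub>v x"
  have y: "y \<in> carrier_vec m" using N x y_def by simp
  have My: "M *\<^sub>v y = x" unfolding y_def by (rule mult_right_inverse_mat_vec[OF M N MN x])
  have "\<alpha> * (y \<bullet> (G *\<^sub>v y)) \<le> y \<bullet> (M *\<^sub>v y)" using coer y unfolding coercive_wrt_def by simp
  also have "\<dots> = x \<bullet> (N *\<^sub>v x)" using My comm_scalar_prod[OF y x] y_def by simp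
  finally have lower: "\<alpha> * (y \<bullet> (G *\<^sub>v y)) \<le> x \<bullet> (N *\<^sub>v x)" .
  have "x \<bullet> (H *\<^sub>v x) \<le> K^2 * (y \<bullet> (G *\<^sub>v y))"
    using bounded_wrt_image_le[OF M G H GH psd bnd _ y] K My by simp
  hence "\<alpha> / K^2 * (x \<bullet> (H *\<^sub>v x)) \<le> \<alpha> / K^2 * (K^2 * (y \<bullet> (G *\<^sub>v y)))"
    using \<alpha> by (intro mult_left_mono) auto
  also have "\<dots> = \<alpha> * (y \<bullet> (G *\<^sub>v y))" using K by simp
  finally show "x \<bullet> (N *\<^sub>v x) \<ge> \<alpha> / K^2 * (x \<bullet> (H *\<^sub>v x))" using lower by simp
qed

lemma bounded_wrt_inverse:
  assumes M: "M \<in> carrier_mat m m" and N: "N \<in> carrier_mat m m" and MN: "M * N = 1\<^sub>m m"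
    and G: "G \<in> carrier_mat m m" and H: "H \<in> carrier_mat m m" and GH: "G * H = 1\<^sub>m m"
    and psd: "psd_mat m G" and cs: "bounded_wrt m 1 G G" and coer: "coercive_wrt m \<alpha> M G"
    and \<alpha>: "\<alpha> > 0"
  shows "bounded_wrt m (1/\<alpha>) N H"
  unfolding bounded_wrt_def
proof (intro ballI)
  fix a b :: "real vec" assume a: "a \<in> carrier_vec m" and b: "b \<in> carrier_vec m"
  define s where "s = N *\<^sub>v b"
  have s: "s \<in> carrier_vec m" using N b s_def by simp
  have Ms: "M *\<^sub>v s = b" unfolding s_def by (rule mult_right_inverse_mat_vec[OF M N MN b])
  have psdH: "psd_mat m H" by (rule psd_mat_inverse[OF G H GH psd])
  have "\<alpha> * (s \<bullet> (G *\<^sub>v s)) \<le> s \<bullet> b" using coer s Ms unfolding coercive_wrt_def by force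
  also have "\<dots> \<le> sqrt (s \<bullet> (G *\<^sub>v s)) * sqrt (b \<bullet> (H *\<^sub>v b))"
    using bounded_wrt_dual[OF G H GH cs s b] by simp
  finally have "s \<bullet> (G *\<^sub>v s) \<le> (1/\<alpha> * sqrt (b \<bullet> (H *\<^sub>v b))) * sqrt (s \<bullet> (G *\<^sub>v s))"
    using \<alpha> by (simp add: field_simps)
  hence energy: "sqrt (s \<bullet> (G *\<^sub>v s)) \<le> 1/\<alpha> * sqrt (b \<bullet> (H *\<^sub>v b))"
    using psd psdH s b \<alpha> unfolding psd_mat_def by (intro sqrt_le_of_le_mult_sqrt) auto
  have "a \<bullet> (N *\<^sub>v b) = s \<bullet> a" unfolding s_def by (rule comm_scalar_prod[of _ m]) (use N a b in auto)
  also have "\<dots> \<le> sqrt (s \<bullet> (G *\<^sub>v s)) * sqrt (a \<bullet> (H *\<^sub>v a))"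
    using bounded_wrt_dual[OF G H GH cs s a] by simp
  also have "\<dots> \<le> 1/\<alpha> * sqrt (b \<bullet> (H *\<^sub>v b)) * sqrt (a \<bullet> (H *\<^sub>v a))"
    using energy psdH a unfolding psd_mat_def by (intro mult_right_mono) auto
  finally show "a \<bullet> (N *\<^sub>v b) \<le> 1/\<alpha> * sqrt (b \<bullet> (H *\<^sub>v b)) * sqrt (a \<bullet> (H *\<^sub>v a))" .
qed

lemma coercive_bounded_inverse:
  assumes cb: "coercive_bounded m \<alpha> K M G" and cs: "bounded_wrt m 1 G G"
    and N: "N \<in> carrier_mat m m" and MN: "M * N = 1\<^sub>m m"
    and H: "H \<in> carrier_mat m m" and GH: "G * H = 1\<^sub>m m"
    and \<alpha>: "\<alpha> > 0" and K: "K > 0"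
  shows "coercive_bounded m (\<alpha> / K^2) (1/\<alpha>) N H"
proof -
  have M: "M \<in> carrier_mat m m" and G: "G \<in> carrier_mat m m" and psd: "psd_mat m G"
    and coer: "coercive_wrt m \<alpha> M G" and bnd: "bounded_wrt m K M G"
    using cb unfolding coercive_bounded_def by auto
  show ?thesis unfolding coercive_bounded_def
    using N H psd_mat_inverse[OF G H GH psd]
      coercive_wrt_inverse[OF M N MN G H GH psd coer bnd _ K]
      bounded_wrt_inverse[OF M N MN G H GH psd cs coer \<alpha>] \<alpha> by simp
qed

lemma coercive_bounded_transpose:
  assumes "coercive_bounded n \<alpha> K B G"
  shows "coercive_bounded n \<alpha> K (transpose_mat B) G"
proof -
  have B: "B \<in> carrier_mat n n" using assms unfolding coercive_bounded_def by simp
  have flip: "w \<bullet> (transpose_mat B *\<^sub>v v) = v \<bullet> (B *\<^sub>v w)"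
    if "v \<in> carrier_vec n" "w \<in> carrier_vec n" for v w
    using transpose_vec_mult_scalar[OF B that(2) that(1)] B that
    by (simp add: comm_scalar_prod[of _ n])
  have "coercive_wrt n \<alpha> (transpose_mat B) G"
    using assms flip unfolding coercive_bounded_def coercive_wrt_def by simp
  moreover have "bounded_wrt n K (transpose_mat B) G" unfolding bounded_wrt_def
  proof (intro ballI)
    fix a b :: "real vec" assume a: "a \<in> carrier_vec n" and b: "b \<in> carrier_vec n"
    have "b \<bullet> (B *\<^sub>v a) \<le> K * sqrt (a \<bullet> (G *\<^sub>v a)) * sqrt (b \<bullet> (G *\<^sub>v b))"
      using assms a b unfolding coercive_bounded_def bounded_wrt_def by simp
    thus "a \<bullet> (transpose_mat B *\<^sub>v b) \<le> K * sqrt (b \<bullet> (G *\<^sub>v b)) * sqrt (a \<bullet> (G *\<^sub>v a))"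
      using flip[OF b a] by (simp add: ac_simps)
  qed
  ultimately show ?thesis using assms B unfolding coercive_bounded_def by simp
qed

lemma coercive_bounded_spectral_equiv:
  assumes cb: "coercive_bounded n \<alpha> K B G" and A0: "A0 \<in> carrier_mat n n" and psd: "psd_mat n A0"
    and equiv: "\<And>v. v \<in> carrier_vec n \<Longrightarrow>
        \<gamma>0 * (v \<bullet> (G *\<^sub>v v)) \<le> v \<bullet> (A0 *\<^sub>v v) \<and> v \<bullet> (A0 *\<^sub>v v) \<le> \<gamma>1 * (v \<bullet> (G *\<^sub>v v))"
    and \<alpha>: "\<alpha> \<ge> 0" and K: "K \<ge> 0" and \<gamma>0: "\<gamma>0 > 0" and \<gamma>1: "\<gamma>1 > 0"
  shows "coercive_bounded n (\<alpha> / \<gamma>1) (K / \<gamma>0) B A0"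
proof -
  have G: "psd_mat n G" and coer: "coercive_wrt n \<alpha> B G" and bnd: "bounded_wrt n K B G"
    using cb unfolding coercive_bounded_def by auto
  have sqrt_le: "sqrt (v \<bullet> (G *\<^sub>v v)) \<le> sqrt (v \<bullet> (A0 *\<^sub>v v)) / sqrt \<gamma>0" if v: "v \<in> carrier_vec n" for v
  proof -
    have "v \<bullet> (G *\<^sub>v v) \<le> (v \<bullet> (A0 *\<^sub>v v)) / \<gamma>0" using equiv[OF v] \<gamma>0 by (simp add: field_simps)
    thus ?thesis by (metis real_sqrt_divide real_sqrt_le_mono)
  qed
  have "coercive_wrt n (\<alpha> / \<gamma>1) B A0" unfolding coercive_wrt_def
  proof
    fix v :: "real vec" assume v: "v \<in> carrier_vec n"
    have "\<alpha> / \<gamma>1 * (v \<bullet> (A0 *\<^sub>v v)) \<le> \<alpha> / \<gamma>1 * (\<gamma>1 * (v \<bullet> (G *\<^sub>v v)))"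
      using equiv[OF v] \<alpha> \<gamma>1 by (intro mult_left_mono) auto
    also have "\<dots> \<le> v \<bullet> (B *\<^sub>v v)" using coer v \<gamma>1 unfolding coercive_wrt_def by simp
    finally show "v \<bullet> (B *\<^sub>v v) \<ge> \<alpha> / \<gamma>1 * (v \<bullet> (A0 *\<^sub>v v))" .
  qed
  moreover have "bounded_wrt n (K / \<gamma>0) B A0" unfolding bounded_wrt_def
  proof (intro ballI)
    fix a b :: "real vec" assume a: "a \<in> carrier_vec n" and b: "b \<in> carrier_vec n"
    have "a \<bullet> (B *\<^sub>v b) \<le> K * sqrt (b \<bullet> (G *\<^sub>v b)) * sqrt (a \<bullet> (G *\<^sub>v a))"
      using bnd a b unfolding bounded_wrt_def by simp
    also have "\<dots> \<le> K * (sqrt (b \<bullet> (A0 *\<^sub>v b)) / sqrt \<gamma>0) * (sqrt (a \<bullet> (A0 *\<^sub>v a)) / sqrt \<gamma>0)"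
      using sqrt_le[OF a] sqrt_le[OF b] G psd a b K \<gamma>0 unfolding psd_mat_def
      by (intro mult_mono mult_left_mono) auto
    also have "\<dots> = K / \<gamma>0 * sqrt (b \<bullet> (A0 *\<^sub>v b)) * sqrt (a \<bullet> (A0 *\<^sub>v a))"
      using \<gamma>0 by (simp add: field_simps)
    finally show "a \<bullet> (B *\<^sub>v b) \<le> K / \<gamma>0 * sqrt (b \<bullet> (A0 *\<^sub>v b)) * sqrt (a \<bullet> (A0 *\<^sub>v a))" .
  qed
  ultimately show ?thesis using cb A0 psd unfolding coercive_bounded_def by simp
qed

subsection \<open>Congruences and sums\<close>

lemma congruence_scalar_prod:
  fixes E N :: "real mat"
  assumes E: "E \<in> carrier_mat n m" and N: "N \<in> carrier_mat m m"
    and w: "w \<in> carrier_vec n" and u: "u \<in> carrier_vec n"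
  shows "w \<bullet> ((E * N * transpose_mat E) *\<^sub>v u)
       = (transpose_mat E *\<^sub>v w) \<bullet> (N *\<^sub>v (transpose_mat E *\<^sub>v u))"
proof -
  have "(E * N * transpose_mat E) *\<^sub>v u = (E * N) *\<^sub>v (transpose_mat E *\<^sub>v u)"
    by (rule assoc_mult_mat_vec[of _ n m _ n]) (use E N u in auto)
  also have "\<dots> = E *\<^sub>v (N *\<^sub>v (transpose_mat E *\<^sub>v u))"
    by (rule assoc_mult_mat_vec[of _ n m _ m]) (use E N u in auto)
  finally have "(E * N * transpose_mat E) *\<^sub>v u = E *\<^sub>v (N *\<^sub>v (transpose_mat E *\<^sub>v u))" .
  moreover have "(transpose_mat E *\<^sub>v w) \<bullet> (N *\<^sub>v (transpose_mat E *\<^sub>v u))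
     = w \<bullet> (E *\<^sub>v (N *\<^sub>v (transpose_mat E *\<^sub>v u)))"
    by (rule transpose_vec_mult_scalar[OF E _ w]) (use N u E in simp)
  ultimately show ?thesis by simp
qed

lemma psd_mat_congruence:
  assumes E: "E \<in> carrier_mat n m" and N0: "N0 \<in> carrier_mat m m" and psd: "psd_mat m N0"
  shows "psd_mat n (E * N0 * transpose_mat E)"
  unfolding psd_mat_def
proof
  fix u :: "real vec" assume u: "u \<in> carrier_vec n"
  have Eu: "transpose_mat E *\<^sub>v u \<in> carrier_vec m" using E u by simp
  have "u \<bullet> ((E * N0 * transpose_mat E) *\<^sub>v u)
      = (transpose_mat E *\<^sub>v u) \<bullet> (N0 *\<^sub>v (transpose_mat E *\<^sub>v u))"
    by (rule congruence_scalar_prod[OF E N0 u u])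
  also have "\<dots> \<ge> 0" using psd Eu unfolding psd_mat_def by blast
  finally show "u \<bullet> ((E * N0 * transpose_mat E) *\<^sub>v u) \<ge> 0" .
qed

lemma coercive_wrt_congruence:
  assumes E: "E \<in> carrier_mat n m" and N: "N \<in> carrier_mat m m" and N0: "N0 \<in> carrier_mat m m"
    and coer: "coercive_wrt m \<alpha> N N0"
  shows "coercive_wrt n \<alpha> (E * N * transpose_mat E) (E * N0 * transpose_mat E)"
  unfolding coercive_wrt_def
proof
  fix u :: "real vec" assume u: "u \<in> carrier_vec n"
  have Eu: "transpose_mat E *\<^sub>v u \<in> carrier_vec m" using E u by simp
  show "u \<bullet> ((E * N * transpose_mat E) *\<^sub>v u) \<ge> \<alpha> * (u \<bullet> ((E * N0 * transpose_mat E) *\<^sub>v u))"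
    unfolding congruence_scalar_prod[OF E N u u] congruence_scalar_prod[OF E N0 u u]
    using coer Eu unfolding coercive_wrt_def by blast
qed

lemma bounded_wrt_congruence:
  assumes E: "E \<in> carrier_mat n m" and N: "N \<in> carrier_mat m m" and N0: "N0 \<in> carrier_mat m m"
    and bnd: "bounded_wrt m K N N0"
  shows "bounded_wrt n K (E * N * transpose_mat E) (E * N0 * transpose_mat E)"
  unfolding bounded_wrt_def
proof (intro ballI)
  fix a b :: "real vec" assume a: "a \<in> carrier_vec n" and b: "b \<in> carrier_vec n"
  have Ea: "transpose_mat E *\<^sub>v a \<in> carrier_vec m" and Eb: "transpose_mat E *\<^sub>v b \<in> carrier_vec m"
    using E a b by simp_all
  show "a \<bullet> ((E * N * transpose_mat E) *\<^sub>v b)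
      \<le> K * sqrt (b \<bullet> ((E * N0 * transpose_mat E) *\<^sub>v b)) * sqrt (a \<bullet> ((E * N0 * transpose_mat E) *\<^sub>v a))"
    unfolding congruence_scalar_prod[OF E N a b] congruence_scalar_prod[OF E N0 a a]
      congruence_scalar_prod[OF E N0 b b]
    using bnd Ea Eb unfolding bounded_wrt_def by blast
qed

lemma coercive_bounded_congruence:
  assumes E: "E \<in> carrier_mat n m" and cb: "coercive_bounded m \<alpha> K N N0"
  shows "coercive_bounded n \<alpha> K (E * N * transpose_mat E) (E * N0 * transpose_mat E)"
  using cb E psd_mat_congruence[OF E] coercive_wrt_congruence[OF E] bounded_wrt_congruence[OF E]
  unfolding coercive_bounded_def by auto

lemma coercive_bounded_add:
  assumes F: "coercive_bounded n \<alpha> K F F0" and G: "coercive_bounded n \<alpha> K G G0" and K: "K \<ge> 0"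
  shows "coercive_bounded n \<alpha> K (F + G) (F0 + G0)"
proof -
  have Fc: "F \<in> carrier_mat n n" "F0 \<in> carrier_mat n n"
    and Gc: "G \<in> carrier_mat n n" "G0 \<in> carrier_mat n n"
    using F G unfolding coercive_bounded_def by auto
  have dist: "u \<bullet> ((X + Y) *\<^sub>v v) = u \<bullet> (X *\<^sub>v v) + u \<bullet> (Y *\<^sub>v v)"
    if "X \<in> carrier_mat n n" "Y \<in> carrier_mat n n" "u \<in> carrier_vec n" "v \<in> carrier_vec n"
    for X Y :: "real mat" and u v
    using that by (simp add: add_mult_distrib_mat_vec[of _ n n] scalar_prod_add_distrib[of _ n])
  note F' = F[unfolded coercive_bounded_def psd_mat_def coercive_wrt_def bounded_wrt_def]
  note G' = G[unfolded coercive_bounded_def psd_mat_def coercive_wrt_def bounded_wrt_def]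
  have "bounded_wrt n K (F + G) (F0 + G0)" unfolding bounded_wrt_def
  proof (intro ballI)
    fix a b :: "real vec" assume a: "a \<in> carrier_vec n" and b: "b \<in> carrier_vec n"
    have "a \<bullet> ((F + G) *\<^sub>v b) = a \<bullet> (F *\<^sub>v b) + a \<bullet> (G *\<^sub>v b)" by (rule dist[OF Fc(1) Gc(1) a b])
    also have "\<dots> \<le> K * sqrt (b \<bullet> (F0 *\<^sub>v b)) * sqrt (a \<bullet> (F0 *\<^sub>v a))
                 + K * sqrt (b \<bullet> (G0 *\<^sub>v b)) * sqrt (a \<bullet> (G0 *\<^sub>v a))"
      using F' G' a b by (intro add_mono) auto
    also have "\<dots> = K * (sqrt (b \<bullet> (F0 *\<^sub>v b)) * sqrt (a \<bullet> (F0 *\<^sub>v a))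
                 + sqrt (b \<bullet> (G0 *\<^sub>v b)) * sqrt (a \<bullet> (G0 *\<^sub>v a)))"
      by (simp add: algebra_simps)
    also have "\<dots> \<le> K * (sqrt (b \<bullet> (F0 *\<^sub>v b) + b \<bullet> (G0 *\<^sub>v b))
                       * sqrt (a \<bullet> (F0 *\<^sub>v a) + a \<bullet> (G0 *\<^sub>v a)))"
      using F' G' a b K by (intro mult_left_mono sqrt_mult_add_le) auto
    finally show "a \<bullet> ((F + G) *\<^sub>v b) \<le> K * sqrt (b \<bullet> ((F0 + G0) *\<^sub>v b)) * sqrt (a \<bullet> ((F0 + G0) *\<^sub>v a))"
      using dist[OF Fc(2) Gc(2) a a] dist[OF Fc(2) Gc(2) b b] by simp
  qed
  moreover have "coercive_wrt n \<alpha> (F + G) (F0 + G0)" "psd_mat n (F0 + G0)"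
    using F' G' dist[OF Fc(1) Gc(1)] dist[OF Fc(2) Gc(2)]
    unfolding coercive_wrt_def psd_mat_def by (auto simp: distrib_left add_mono)
  ultimately show ?thesis unfolding coercive_bounded_def using Fc Gc by simp
qed

lemma coercive_bounded_msum:
  assumes "\<And>k. 1 \<le> k \<Longrightarrow> k \<le> N \<Longrightarrow> coercive_bounded n \<alpha> K (f k) (g k)" and K: "K \<ge> 0"
  shows "coercive_bounded n \<alpha> K (msum n f N) (msum n g N)"
  using assms(1)
proof (induction N)
  case 0
  have "(0\<^sub>m n n :: real mat) *\<^sub>v u = 0\<^sub>v n" if "u \<in> carrier_vec n" for u
    using that by (intro eq_vecI) (auto simp: scalar_prod_def)
  thus ?case unfolding coercive_bounded_def psd_mat_def coercive_wrt_def bounded_wrt_def by simp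
next
  case (Suc N)
  thus ?case using coercive_bounded_add[OF _ _ K] by simp
qed

subsection \<open>The additive Schwarz preconditioner\<close>

lemma extension_mat_inj:
  assumes E: "extension_mat n m E" and x: "x \<in> carrier_vec m" and Ex: "E *\<^sub>v x = 0\<^sub>v n"
  shows "x = 0\<^sub>v m"
proof -
  from E obtain \<sigma> where Ec: "E \<in> carrier_mat n m" and inj: "inj_on \<sigma> {0..<m}"
    and \<sigma>: "\<And>j. j < m \<Longrightarrow> \<sigma> j < n \<and> col E j = unit_vec n (\<sigma> j)"
    unfolding extension_mat_def by blast
  have "x $ j = 0" if j: "j < m" for j
  proof -
    have \<sigma>j: "\<sigma> j < n" using \<sigma> j by blast
    have entry: "E $$ (\<sigma> j, i) = (if i = j then 1 else 0)" if i: "i < m" for i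
    proof -
      have "E $$ (\<sigma> j, i) = unit_vec n (\<sigma> i) $ (\<sigma> j)"
        using Ec i \<sigma>j \<sigma>[OF i] by (metis carrier_matD col_def index_vec)
      thus ?thesis using \<sigma>j inj i j unfolding inj_on_def by (auto simp: unit_vec_def)
    qed
    have "(E *\<^sub>v x) $ (\<sigma> j) = (\<Sum>i\<in>{0..<m}. E $$ (\<sigma> j, i) * x $ i)"
      using Ec \<sigma>j x by (simp add: scalar_prod_def)
    also have "\<dots> = (\<Sum>i\<in>{0..<m}. if i = j then x $ i else 0)"
      by (rule sum.cong) (auto simp: entry)
    also have "\<dots> = x $ j" using j by simp
    finally show ?thesis using Ex \<sigma>j by simp
  qed
  thus ?thesis using x by (intro eq_vecI) auto
qed

lemma coercive_bounded_subspace_correction: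
  fixes A A0 E :: "real mat"
  assumes cb: "coercive_bounded n c0 c1 A A0" and cs: "bounded_wrt n 1 A0 A0"
    and pd0: "\<And>v. v \<in> carrier_vec n \<Longrightarrow> v \<noteq> 0\<^sub>v n \<Longrightarrow> v \<bullet> (A0 *\<^sub>v v) > 0"
    and c0: "c0 > 0" and c1: "c1 > 0"
    and E: "E \<in> carrier_mat n m"
    and inj: "\<And>x. x \<in> carrier_vec m \<Longrightarrow> E *\<^sub>v x = 0\<^sub>v n \<Longrightarrow> x = 0\<^sub>v m"
  shows "coercive_bounded n (c0/c1^2) (1/c0)
           (E * minv (transpose_mat E * A * E) * transpose_mat E)
           (E * minv (transpose_mat E * A0 * E) * transpose_mat E)"
proof -
  define M where "M = transpose_mat E * A * E"
  define M0 where "M0 = transpose_mat E * A0 * E"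
  have Et: "transpose_mat E \<in> carrier_mat m n" using E by simp
  have A0: "A0 \<in> carrier_mat n n" using cb unfolding coercive_bounded_def by simp
  have cbM: "coercive_bounded m c0 c1 M M0"
    using coercive_bounded_congruence[OF Et cb] unfolding M_def M0_def by simp
  have csM: "bounded_wrt m 1 M0 M0"
    using bounded_wrt_congruence[OF Et A0 A0 cs] unfolding M0_def by simp
  have M: "M \<in> carrier_mat m m" and M0: "M0 \<in> carrier_mat m m"
    using cbM unfolding coercive_bounded_def by auto
  have pdM0: "x \<bullet> (M0 *\<^sub>v x) > 0" if x: "x \<in> carrier_vec m" "x \<noteq> 0\<^sub>v m" for x
  proof -
    have "x \<bullet> (M0 *\<^sub>v x) = (E *\<^sub>v x) \<bullet> (A0 *\<^sub>v (E *\<^sub>v x))"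
      using congruence_scalar_prod[OF Et A0 x(1) x(1)] unfolding M0_def by simp
    moreover have "E *\<^sub>v x \<noteq> 0\<^sub>v n" using inj x by blast
    ultimately show ?thesis using pd0 E x by simp
  qed
  have pdM: "x \<bullet> (M *\<^sub>v x) > 0" if x: "x \<in> carrier_vec m" "x \<noteq> 0\<^sub>v m" for x
    using pdM0[OF x] cbM x c0 unfolding coercive_bounded_def coercive_wrt_def
    by (metis mult_pos_pos order_less_le_trans)
  note N = minv_correct[OF M pos_def_imp_invertible_mat[OF M pdM]]
  note N0 = minv_correct[OF M0 pos_def_imp_invertible_mat[OF M0 pdM0]]
  have "coercive_bounded m (c0/c1^2) (1/c0) (minv M) (minv M0)"
    using coercive_bounded_inverse[OF cbM csM _ _ _ _ c0 c1] N N0 by blast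
  from coercive_bounded_congruence[OF E this] show ?thesis unfolding M_def M0_def .
qed

lemma coercive_bounded_schwarz_inv:
  fixes A A0 P :: "real mat"
  assumes cb: "coercive_bounded n c0 c1 A A0" and cs: "bounded_wrt n 1 A0 A0"
    and pd0: "\<And>v. v \<in> carrier_vec n \<Longrightarrow> v \<noteq> 0\<^sub>v n \<Longrightarrow> v \<bullet> (A0 *\<^sub>v v) > 0"
    and c0: "c0 > 0" and c1: "c1 > 0"
    and ext: "\<And>k. 1 \<le> k \<Longrightarrow> k \<le> Ns \<Longrightarrow> extension_mat n (ns k) (Is k)"
    and P: "P \<in> carrier_mat n nc"
    and P_rank: "\<And>x. x \<in> carrier_vec nc \<Longrightarrow> P *\<^sub>v x = 0\<^sub>v n \<Longrightarrow> x = 0\<^sub>v nc"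
  shows "coercive_bounded n (c0/c1^2) (1/c0) (schwarz_inv n A P Ns Is) (schwarz_inv n A0 P Ns Is)"
  unfolding schwarz_inv_def
proof (rule coercive_bounded_add)
  show "coercive_bounded n (c0/c1^2) (1/c0)
          (P * minv (transpose_mat P * A * P) * transpose_mat P)
          (P * minv (transpose_mat P * A0 * P) * transpose_mat P)"
    by (rule coercive_bounded_subspace_correction[OF cb cs pd0 c0 c1 P P_rank])
  show "coercive_bounded n (c0/c1^2) (1/c0)
          (msum n (\<lambda>k. Is k * minv (transpose_mat (Is k) * A * Is k) * transpose_mat (Is k)) Ns)
          (msum n (\<lambda>k. Is k * minv (transpose_mat (Is k) * A0 * Is k) * transpose_mat (Is k)) Ns)"
  proof (rule coercive_bounded_msum)
    fix k assume "1 \<le> k" "k \<le> Ns"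
    hence e: "extension_mat n (ns k) (Is k)" using ext by blast
    hence "Is k \<in> carrier_mat n (ns k)" unfolding extension_mat_def by blast
    from coercive_bounded_subspace_correction[OF cb cs pd0 c0 c1 this extension_mat_inj[OF e]]
    show "coercive_bounded n (c0/c1^2) (1/c0)
            (Is k * minv (transpose_mat (Is k) * A * Is k) * transpose_mat (Is k))
            (Is k * minv (transpose_mat (Is k) * A0 * Is k) * transpose_mat (Is k))" .
  qed (use c0 in simp)
qed (use c0 in simp)

lemma bounded_wrt_self_schwarz_inv:
  fixes A0 P :: "real mat"
  assumes A0: "A0 \<in> carrier_mat n n" and sym: "transpose_mat A0 = A0"
    and pd0: "\<And>v. v \<in> carrier_vec n \<Longrightarrow> v \<noteq> 0\<^sub>v n \<Longrightarrow> v \<bullet> (A0 *\<^sub>v v) > 0"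
    and ext: "\<And>k. 1 \<le> k \<Longrightarrow> k \<le> Ns \<Longrightarrow> extension_mat n (ns k) (Is k)"
    and P: "P \<in> carrier_mat n nc"
    and P_rank: "\<And>x. x \<in> carrier_vec nc \<Longrightarrow> P *\<^sub>v x = 0\<^sub>v n \<Longrightarrow> x = 0\<^sub>v nc"
  shows "bounded_wrt n 1 (schwarz_inv n A0 P Ns Is) (schwarz_inv n A0 P Ns Is)"
proof -
  have psd: "psd_mat n A0" by (rule pos_def_imp_psd_mat[OF A0 pd0])
  have cs: "bounded_wrt n 1 A0 A0" by (rule psd_sym_bounded_self[OF A0 sym psd])
  have "coercive_bounded n 1 1 A0 A0"
    using A0 psd cs unfolding coercive_bounded_def coercive_wrt_def by simp
  hence "coercive_bounded n (1/1^2) (1/1) (schwarz_inv n A0 P Ns Is) (schwarz_inv n A0 P Ns Is)"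
    by (rule coercive_bounded_schwarz_inv[OF _ cs pd0 _ _ ext P P_rank]) simp_all
  thus ?thesis unfolding coercive_bounded_def by simp
qed

theorem lemma3p2:
  fixes n nc Ns :: nat and ns :: "nat \<Rightarrow> nat"
    and A A0 P :: "real mat" and Is :: "nat \<Rightarrow> real mat"
    and c0 c1 \<gamma>0 \<gamma>1 :: real
  assumes A: "A \<in> carrier_mat n n"
    and A0: "A0 \<in> carrier_mat n n"
    and A0_sym: "transpose_mat A0 = A0"
    and A0_pd: "\<And>v. v \<in> carrier_vec n \<Longrightarrow> v \<noteq> 0\<^sub>v n \<Longrightarrow> v \<bullet> (A0 *\<^sub>v v) > 0"
    and c0: "c0 > 0" and c1: "c1 > 0"
    and coer: "\<And>v. v \<in> carrier_vec n \<Longrightarrow> v \<bullet> (A *\<^sub>v v) \<ge> c0 * (v \<bullet> (A0 *\<^sub>v v))"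
    and bnd: "\<And>v w. v \<in> carrier_vec n \<Longrightarrow> w \<in> carrier_vec n \<Longrightarrow>
                w \<bullet> (A *\<^sub>v v) \<le> c1 * sqrt (v \<bullet> (A0 *\<^sub>v v)) * sqrt (w \<bullet> (A0 *\<^sub>v w))"
    and ext: "\<And>k. 1 \<le> k \<Longrightarrow> k \<le> Ns \<Longrightarrow> extension_mat n (ns k) (Is k)"
    and P: "P \<in> carrier_mat n nc"
    and P_rank: "\<And>x. x \<in> carrier_vec nc \<Longrightarrow> P *\<^sub>v x = 0\<^sub>v n \<Longrightarrow> x = 0\<^sub>v nc"
    and B_def: "invertible_mat (schwarz_inv n A P Ns Is)"
    and B0_def: "invertible_mat (schwarz_inv n A0 P Ns Is)"
    and g0: "\<gamma>0 > 0" and g1: "\<gamma>1 > 0"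
    and spec: "\<And>v. v \<in> carrier_vec n \<Longrightarrow>
        \<gamma>0 * (v \<bullet> (minv (schwarz_inv n A0 P Ns Is) *\<^sub>v v)) \<le> v \<bullet> (A0 *\<^sub>v v) \<and>
        v \<bullet> (A0 *\<^sub>v v) \<le> \<gamma>1 * (v \<bullet> (minv (schwarz_inv n A0 P Ns Is) *\<^sub>v v))"
  shows "let B = minv (schwarz_inv n A P Ns Is);
             \<beta>0 = c0 ^ 3 / (c1\<^sup>2 * \<gamma>1); \<beta>1 = c1\<^sup>2 / (c0 * \<gamma>0) in
         (\<forall>BB \<in> {B, transpose_mat B}.
            (\<forall>v \<in> carrier_vec n. v \<bullet> (BB *\<^sub>v v) \<ge> \<beta>0 * (v \<bullet> (A0 *\<^sub>v v))) \<and>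
            (\<forall>v \<in> carrier_vec n. \<forall>w \<in> carrier_vec n.
               w \<bullet> (BB *\<^sub>v v) \<le> \<beta>1 * sqrt (v \<bullet> (A0 *\<^sub>v v)) * sqrt (w \<bullet> (A0 *\<^sub>v w))))"
proof -
  define C where "C = schwarz_inv n A P Ns Is"
  define C0 where "C0 = schwarz_inv n A0 P Ns Is"
  have psd: "psd_mat n A0" by (rule pos_def_imp_psd_mat[OF A0 A0_pd])
  have cs: "bounded_wrt n 1 A0 A0" by (rule psd_sym_bounded_self[OF A0 A0_sym psd])
  have "coercive_bounded n c0 c1 A A0"
    using A A0 psd coer bnd unfolding coercive_bounded_def coercive_wrt_def bounded_wrt_def by simp
  from coercive_bounded_schwarz_inv[OF this cs A0_pd c0 c1 ext P P_rank]
  have cbC: "coercive_bounded n (c0/c1^2) (1/c0) C C0" unfolding C_def C0_def .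
  have csC0: "bounded_wrt n 1 C0 C0"
    unfolding C0_def by (rule bounded_wrt_self_schwarz_inv[OF A0 A0_sym A0_pd ext P P_rank])
  have C: "C \<in> carrier_mat n n" and C0: "C0 \<in> carrier_mat n n"
    using cbC unfolding coercive_bounded_def by auto
  note B = minv_correct[OF C B_def[folded C_def]]
  note B0 = minv_correct[OF C0 B0_def[folded C0_def]]
  have "coercive_bounded n ((c0/c1^2) / (1/c0)^2) (1 / (c0/c1^2)) (minv C) (minv C0)"
    using coercive_bounded_inverse[OF cbC csC0] B B0 c0 c1 by simp
  from coercive_bounded_spectral_equiv[OF this A0 psd spec[folded C0_def] _ _ g0 g1]
  have cbB: "coercive_bounded n (c0 ^ 3 / (c1\<^sup>2 * \<gamma>1)) (c1\<^sup>2 / (c0 * \<gamma>0)) (minv C) A0"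
    using c0 c1 by (simp add: field_simps power3_eq_cube power2_eq_square)
  have estimates: "(\<forall>v \<in> carrier_vec n. v \<bullet> (BB *\<^sub>v v) \<ge> \<beta>0 * (v \<bullet> (A0 *\<^sub>v v))) \<and>
      (\<forall>v \<in> carrier_vec n. \<forall>w \<in> carrier_vec n.
         w \<bullet> (BB *\<^sub>v v) \<le> \<beta>1 * sqrt (v \<bullet> (A0 *\<^sub>v v)) * sqrt (w \<bullet> (A0 *\<^sub>v w)))"
    if "coercive_bounded n \<beta>0 \<beta>1 BB A0" for \<beta>0 \<beta>1 BB
    using that unfolding coercive_bounded_def coercive_wrt_def bounded_wrt_def by blast
  show ?thesis unfolding Let_def C_def[symmetric]
    using estimates[OF cbB] estimates[OF coercive_bounded_transpose[OF cbB]] by blast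
qed

end
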